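(* Let $M$ be an $A\mathcal{V}$-module with representation $\rho:\mathcal{V}\to\mathfrak{gl}(M)$ and let $s\ge0$. Then $\rho\in\mathrm{Diff}_s(\mathcal{V},\mathrm{End}_\Bbbk(M))$ (i.e. $M$ is $s$-differentiable) if and only if $\mathfrak{m}^s\mathcal{L}_+$ annihilates $M$, where $\mathcal{L}_+$ acts on $M$ by $X^m\frac{\partial}{\partial X_p}\cdot v=\sum_{0\le k\le m}(-1)^{|k|}\binom{m}{k}x^k\rho\!\left(x^{m-k}\frac{\partial}{\partial x_p}\right)v$.
   Context: $\Bbbk$ algebraically closed, characteristic $0$; $A=\Bbbk[x_1,\dots,x_n]$; $\mathcal{V}=\mathrm{Der}(A)$. An $A\mathcal{V}$-module is an $A$-module and $\mathcal{V}$-module $M$ with $\eta(fm)=\eta(f)m+f(\eta m)$; $\rho$ is the action map of $\mathcal{V}$. $\mathcal{L}=\mathrm{Der}(\Bbbk[X_1,\dots,X_n])$, $\mathfrak{m}=(X_1,\dots,X_n)\subset\Bbbk[X_1,\dots,X_n]$, $\mathcal{L}_+=\mathfrak{m}\mathcal{L}$, so $\mathfrak{m}^s\mathcal{L}_+$ is spanned by $X^k\partial/\partial X_i$ with $|k|\ge s+1$; the stated formula (multi-index notation, $\binom{m}{k}=\prod\binom{m_i}{k_i}$) defines an $\mathcal{L}_+$-action commuting with that of the Weyl algebra, coming from an isomorphism $A\#U(\mathcal{V})\cong\mathcal{D}\otimes U(\mathcal{L}_+)$. Differential operators: for a commutative $\Bbbk$-algebra $R$ and $R$-modules $M',N'$,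 $\delta(f)D=D\circ f-f\circ D$ on $\mathrm{Hom}_\Bbbk(M',N')$; $\mathrm{Diff}_{-1}=0$, $\mathrm{Diff}_{s+1}(M',N')=\{D:\delta(f)D\in\mathrm{Diff}_s(M',N')\ \forall f\in R\}$; thus $D\in\mathrm{Diff}_s$ iff $\delta(f_1)\cdots\delta(f_{s+1})D=0$ for all $f_i$. Here $R=A$, $\mathcal{V}$ is an $A$-module via $(f\eta)(g)=f\eta(g)$, and $\mathrm{End}_\Bbbk(M)$ is an $A$-module via $f\cdot T=f\circ T$, so $(\delta(f)\rho)(\eta)=\rho(f\eta)-f\circ\rho(\eta)$. $M$ is called $s$-differentiable if $\rho\in\mathrm{Diff}_s(\mathcal{V},\mathrm{End}_\Bbbk(M))$. *)

theory Defs
  imports "HOL-Library.Poly_Mapping" "HOL-Computational_Algebra.Polynomial"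
begin

text \<open>The polynomial ring A = k[x_i : i in 'n], with 'n a finite type of n variables.
  Monomials (multi-indices) are finitely supported maps 'n to nat.\<close>

type_synonym ('n, 'k) mpoly = "('n \<Rightarrow>\<^sub>0 nat) \<Rightarrow>\<^sub>0 'k"

definition alg_closed :: "'k::field itself \<Rightarrow> bool" where
  "alg_closed _ \<longleftrightarrow> (\<forall>p :: 'k poly. degree p \<ge> 1 \<longrightarrow> (\<exists>x. poly p x = 0))"

definition cst :: "'k::comm_ring_1 \<Rightarrow> ('n, 'k) mpoly" where
  "cst c = Poly_Mapping.single 0 c"

definition xpow :: "('n \<Rightarrow>\<^sub>0 nat) \<Rightarrow> ('n, 'k::comm_ring_1) mpoly" where
  "xpow a = Poly_Mapping.single a 1"

definition pderiv_var :: "'n \<Rightarrow> ('n, 'k::comm_ring_1) mpoly \<Rightarrow> ('n, 'k) mpoly" where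
  "pderiv_var p f = (\<Sum>a\<in>Poly_Mapping.keys f.
      (Poly_Mapping.single (a - Poly_Mapping.single p (1::nat)) (of_nat (Poly_Mapping.lookup a p) * Poly_Mapping.lookup f a) :: ('n, 'k) mpoly))"

definition is_derivation :: "(('n, 'k::comm_ring_1) mpoly \<Rightarrow> ('n, 'k) mpoly) \<Rightarrow> bool" where
  "is_derivation D \<longleftrightarrow>
     (\<forall>f g. D (f + g) = D f + D g) \<and>
     (\<forall>c f. D (cst c * f) = cst c * D f) \<and>
     (\<forall>f g. D (f * g) = f * D g + g * D f)"

definition Der :: "(('n, 'k::comm_ring_1) mpoly \<Rightarrow> ('n, 'k) mpoly) set" where
  "Der = {D. is_derivation D}"

definition A_module :: "(('n, 'k::comm_ring_1) mpoly \<Rightarrow> 'm::ab_group_add \<Rightarrow> 'm) \<Rightarrow> bool" where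
  "A_module act \<longleftrightarrow>
     (\<forall>v. act 1 v = v) \<and>
     (\<forall>f g v. act (f * g) v = act f (act g v)) \<and>
     (\<forall>f g v. act (f + g) v = act f v + act g v) \<and>
     (\<forall>f v w. act f (v + w) = act f v + act f w)"

definition AV_module ::
  "(('n, 'k::comm_ring_1) mpoly \<Rightarrow> 'm::ab_group_add \<Rightarrow> 'm) \<Rightarrow>
   ((('n, 'k) mpoly \<Rightarrow> ('n, 'k) mpoly) \<Rightarrow> 'm \<Rightarrow> 'm) \<Rightarrow> bool" where
  "AV_module act rho \<longleftrightarrow>
     A_module act \<and>
     (\<forall>\<eta>\<in>Der. \<forall>v w. rho \<eta> (v + w) = rho \<eta> v + rho \<eta> w) \<and>
     (\<forall>\<eta>\<in>Der. \<forall>c v. rho \<eta> (act (cst c) v) = act (cst c) (rho \<eta> v)) \<and>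
     (\<forall>\<eta>\<in>Der. \<forall>\<zeta>\<in>Der. \<forall>v. rho (\<lambda>f. \<eta> f + \<zeta> f) v = rho \<eta> v + rho \<zeta> v) \<and>
     (\<forall>\<eta>\<in>Der. \<forall>c v. rho (\<lambda>f. cst c * \<eta> f) v = act (cst c) (rho \<eta> v)) \<and>
     (\<forall>\<eta>\<in>Der. \<forall>\<zeta>\<in>Der. \<forall>v.
        rho (\<lambda>f. \<eta> (\<zeta> f) - \<zeta> (\<eta> f)) v = rho \<eta> (rho \<zeta> v) - rho \<zeta> (rho \<eta> v)) \<and>
     (\<forall>\<eta>\<in>Der. \<forall>f v. rho \<eta> (act f v) = act (\<eta> f) v + act f (rho \<eta> v))"

definition delta ::
  "(('n, 'k::comm_ring_1) mpoly \<Rightarrow> 'm::ab_group_add \<Rightarrow> 'm) \<Rightarrow> ('n, 'k) mpoly \<Rightarrow>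
   ((('n, 'k) mpoly \<Rightarrow> ('n, 'k) mpoly) \<Rightarrow> 'm \<Rightarrow> 'm) \<Rightarrow>
   ((('n, 'k) mpoly \<Rightarrow> ('n, 'k) mpoly) \<Rightarrow> 'm \<Rightarrow> 'm)" where
  "delta act f D = (\<lambda>\<eta> v. D (\<lambda>g. f * \<eta> g) v - act f (D \<eta> v))"

text \<open>Diff_s(V, End_k(M)) as in the paper: Diff_{-1} = 0,
  Diff_{s+1} = {D. for all f, delta(f) D in Diff_s}; maps are compared on V = Der.\<close>
fun is_diff ::
  "(('n, 'k::comm_ring_1) mpoly \<Rightarrow> 'm::ab_group_add \<Rightarrow> 'm) \<Rightarrow> nat \<Rightarrow>
   ((('n, 'k) mpoly \<Rightarrow> ('n, 'k) mpoly) \<Rightarrow> 'm \<Rightarrow> 'm) \<Rightarrow> bool" where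
  "is_diff act 0 D = (\<forall>f. \<forall>\<eta>\<in>Der. \<forall>v. delta act f D \<eta> v = 0)"
| "is_diff act (Suc s) D = (\<forall>f. is_diff act s (delta act f D))"

definition mi_abs :: "('n::finite \<Rightarrow>\<^sub>0 nat) \<Rightarrow> nat" where
  "mi_abs k = (\<Sum>i\<in>UNIV. Poly_Mapping.lookup k i)"

definition mi_le :: "('n \<Rightarrow>\<^sub>0 nat) \<Rightarrow> ('n \<Rightarrow>\<^sub>0 nat) \<Rightarrow> bool" where
  "mi_le k m \<longleftrightarrow> (\<forall>i. Poly_Mapping.lookup k i \<le> Poly_Mapping.lookup m i)"

definition mi_choose :: "('n::finite \<Rightarrow>\<^sub>0 nat) \<Rightarrow> ('n \<Rightarrow>\<^sub>0 nat) \<Rightarrow> nat" where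
  "mi_choose m k = (\<Prod>i\<in>UNIV. Poly_Mapping.lookup m i choose Poly_Mapping.lookup k i)"

definition Lplus_act ::
  "(('n::finite, 'k::comm_ring_1) mpoly \<Rightarrow> 'm::ab_group_add \<Rightarrow> 'm) \<Rightarrow>
   ((('n, 'k) mpoly \<Rightarrow> ('n, 'k) mpoly) \<Rightarrow> 'm \<Rightarrow> 'm) \<Rightarrow>
   ('n \<Rightarrow>\<^sub>0 nat) \<Rightarrow> 'n \<Rightarrow> 'm \<Rightarrow> 'm" where
  "Lplus_act act rho m p v =
     (\<Sum>k\<in>{k. mi_le k m}.
        act (cst ((-1) ^ mi_abs k * of_nat (mi_choose m k)) * xpow k)
            (rho (\<lambda>g. xpow (m - k) * pderiv_var p g) v))"

text \<open>m^s L_+ (spanned by X^m d/dX_p with |m| >= s+1) annihilates M\<close>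
definition annihilated_by_msLplus ::
  "(('n::finite, 'k::comm_ring_1) mpoly \<Rightarrow> 'm::ab_group_add \<Rightarrow> 'm) \<Rightarrow>
   ((('n, 'k) mpoly \<Rightarrow> ('n, 'k) mpoly) \<Rightarrow> 'm \<Rightarrow> 'm) \<Rightarrow> nat \<Rightarrow> bool" where
  "annihilated_by_msLplus act rho s \<longleftrightarrow>
     (\<forall>m p v. mi_abs m \<ge> s + 1 \<longrightarrow> Lplus_act act rho m p v = 0)"

end

theory Submission
  imports Defs "HOL-Library.FuncSet"
begin

text \<open>
  For a map \<open>E\<close> from derivations to operators, let \<open>\<Phi>\<^sub>E(m)\<close> be the operator assigned to
  \<open>X\<^sup>m \<partial>/\<partial>X\<^sub>p\<close> by the defining formula of the \<open>L\<^sub>+\<close>-action with \<open>\<rho>\<close> replaced by \<open>E\<close>.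
  Pascal's rule gives \<open>\<Phi>\<^bsub>\<delta>(x\<^sub>i) E\<^esub>(m) = \<Phi>\<^sub>E(m + e\<^sub>i)\<close>. Together with the product rule
  \<open>\<delta>(f g) = \<delta>(f) \<delta>(g) + g \<delta>(f) + f \<delta>(g)\<close> and additivity of \<open>\<delta>\<close>, this shows that \<open>\<Phi>\<^sub>E\<close> vanishes in
  degrees \<open>\<ge> t + 1\<close> iff \<open>\<Phi>\<^bsub>\<delta>(f) E\<^esub>\<close> vanishes in degrees \<open>\<ge> t\<close> for every \<open>f\<close>. In degrees \<open>\<ge> 0\<close>,
  \<open>\<Phi>\<^sub>E\<close> vanishes iff \<open>E\<close> vanishes on \<open>Der\<close>: \<open>\<Phi>\<^sub>E(m)\<close> is \<open>E(x\<^sup>m \<partial>/\<partial>x\<^sub>p)\<close> plus terms of lower degree,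
  and the \<open>x\<^sup>m \<partial>/\<partial>x\<^sub>p\<close> span \<open>Der\<close>. Induction on \<open>s\<close> along the recursion defining \<open>Diff\<^sub>s\<close> finishes
  the proof.
\<close>

text \<open>\<open>Suc 0\<close> rather than \<open>1\<close>: the simplifier rewrites \<open>Poly_Mapping.single p 1\<close> to this form.\<close>

abbreviation mi_unit :: "'n \<Rightarrow> ('n \<Rightarrow>\<^sub>0 nat)" where
  "mi_unit i \<equiv> Poly_Mapping.single i (Suc 0)"

lemma lookup_mi_unit: "Poly_Mapping.lookup (mi_unit i) j = (if i = j then 1 else 0)"
  by (simp add: lookup_single when_def)

lemma lookup_cst_mult: "Poly_Mapping.lookup (cst c * f) a = c * Poly_Mapping.lookup f a"
  by (simp add: cst_def mult_map_scale_conv_mult[symmetric] Poly_Mapping.map.rep_eq when_def)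

lemma cst_mult_xpow: "cst c * xpow a = Poly_Mapping.single a c"
  by (simp add: cst_def xpow_def mult_single)

lemma xpow_add: "xpow (a + b) = (xpow a * xpow b :: ('n, 'k::comm_ring_1) mpoly)"
  by (simp add: xpow_def mult_single)

lemma xpow_0: "xpow 0 = 1"
  by (simp add: xpow_def)

lemma cst_0: "cst 0 = 0"
  by (simp add: cst_def)

lemma cst_1: "cst 1 = 1"
  by (simp add: cst_def)

lemma cst_add: "cst (a + b) = cst a + cst b"
  by (simp add: cst_def single_add)

lemma cst_uminus: "cst (- a) = - cst a"
  by (simp add: cst_def single_uminus)

lemma mpoly_monomial_expansion:
  "f = (\<Sum>a\<in>Poly_Mapping.keys f. cst (Poly_Mapping.lookup f a) * xpow a)"
  by (rule poly_mapping_eqI) (simp add: cst_mult_xpow lookup_sum lookup_single when_def in_keys_iff)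

lemma mpoly_induct [case_names monomial zero add]:
  assumes monomial: "\<And>c a. P (cst c * xpow a)"
    and zero: "P 0"
    and add: "\<And>f g. P f \<Longrightarrow> P g \<Longrightarrow> P (f + g)"
  shows "P f"
proof -
  have "P (\<Sum>a\<in>A. cst (Poly_Mapping.lookup f a) * xpow a)" if "finite A" for A
    using that by (induction A rule: finite_induct) (simp_all add: zero add monomial)
  from this[OF finite_keys[of f]] show ?thesis
    by (simp only: mpoly_monomial_expansion[symmetric])
qed

lemma additive_eq_0_if_monomials:
  fixes L :: "('n, 'k::comm_ring_1) mpoly \<Rightarrow> 'b::ab_group_add"
  assumes "\<And>f g. L (f + g) = L f + L g" and "\<And>c a. L (cst c * xpow a) = 0"
  shows "L f = 0"
proof (induction f rule: mpoly_induct)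
  case zero
  show ?case using assms(1)[of 0 0] by simp
qed (simp_all add: assms)

lemma pderiv_var_eq_sum_superset:
  assumes "finite A" "Poly_Mapping.keys f \<subseteq> A"
  shows "pderiv_var p f = (\<Sum>a\<in>A.
    Poly_Mapping.single (a - mi_unit p) (of_nat (Poly_Mapping.lookup a p) * Poly_Mapping.lookup f a))"
  unfolding pderiv_var_def One_nat_def
  by (rule sum.mono_neutral_left) (use assms in \<open>auto simp: in_keys_iff\<close>)

lemma pderiv_var_add: "pderiv_var p (f + g) = pderiv_var p f + pderiv_var p (g :: ('n, 'k::comm_ring_1) mpoly)"
proof -
  let ?A = "Poly_Mapping.keys f \<union> Poly_Mapping.keys g \<union> Poly_Mapping.keys (f + g)"
  define S where "S h = (\<Sum>a\<in>?A.
      Poly_Mapping.single (a - mi_unit p) (of_nat (Poly_Mapping.lookup a p) * Poly_Mapping.lookup h a))" for h :: "('n, 'k) mpoly"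
  have expand: "pderiv_var p h = S h" if "Poly_Mapping.keys h \<subseteq> ?A" for h
    unfolding S_def
    by (rule pderiv_var_eq_sum_superset) (use that in auto)
  have "pderiv_var p f = S f" "pderiv_var p g = S g" "pderiv_var p (f + g) = S (f + g)"
    by (auto intro!: expand)
  then show ?thesis
    by (simp add: S_def lookup_add distrib_left single_add sum.distrib)
qed

lemma pderiv_var_cst_mult: "pderiv_var p (cst c * f) = cst c * pderiv_var p (f :: ('n, 'k::comm_ring_1) mpoly)"
proof -
  have "Poly_Mapping.keys (cst c * f) \<subseteq> Poly_Mapping.keys f"
    by (auto simp: in_keys_iff lookup_cst_mult)
  then have "pderiv_var p (cst c * f) = (\<Sum>a\<in>Poly_Mapping.keys f.
      Poly_Mapping.single (a - mi_unit p) (of_nat (Poly_Mapping.lookup a p) * (c * Poly_Mapping.lookup f a)))"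
    by (simp add: pderiv_var_eq_sum_superset[of "Poly_Mapping.keys f"] lookup_cst_mult)
  also have "\<dots> = cst c * pderiv_var p f"
    by (simp add: pderiv_var_def sum_distrib_left cst_def mult_single mult.left_commute)
  finally show ?thesis .
qed

lemma pderiv_var_xpow:
  "pderiv_var p (xpow a :: ('n, 'k::comm_ring_1) mpoly) = cst (of_nat (Poly_Mapping.lookup a p)) * xpow (a - mi_unit p)"
proof -
  have "Poly_Mapping.keys (xpow a :: ('n, 'k) mpoly) \<subseteq> {a}"
    by (simp add: xpow_def)
  then show ?thesis
    by (simp add: pderiv_var_eq_sum_superset[of "{a}"] cst_mult_xpow) (simp add: xpow_def)
qed

lemma xpow_mult_pderiv_var_xpow:
  "xpow a * pderiv_var p (xpow b) =
    cst (of_nat (Poly_Mapping.lookup b p)) * (xpow (a + b - mi_unit p) :: ('n, 'k::comm_ring_1) mpoly)"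
proof (cases "Poly_Mapping.lookup b p = 0")
  case True
  then show ?thesis by (simp add: pderiv_var_xpow cst_0)
next
  case False
  then have "a + (b - mi_unit p) = a + b - mi_unit p"
    by (intro poly_mapping_eqI) (auto simp: lookup_add lookup_minus lookup_mi_unit)
  then show ?thesis
    by (simp only: pderiv_var_xpow mult.left_commute[of "xpow a"] xpow_add[symmetric])
qed

lemma pderiv_var_xpow_mult:
  "pderiv_var p (xpow a * xpow b :: ('n, 'k::comm_ring_1) mpoly) =
    xpow a * pderiv_var p (xpow b) + xpow b * pderiv_var p (xpow a)"
proof -
  have "pderiv_var p (xpow a * xpow b) =
      cst (of_nat (Poly_Mapping.lookup (a + b) p)) * (xpow (a + b - mi_unit p) :: ('n, 'k) mpoly)"
    by (simp add: xpow_add[symmetric] pderiv_var_xpow)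
  then show ?thesis
    by (simp add: xpow_mult_pderiv_var_xpow add.commute[of b a] lookup_add cst_add distrib_right)
qed

lemma pderiv_var_mult:
  "pderiv_var p (f * g :: ('n, 'k::comm_ring_1) mpoly) = f * pderiv_var p g + g * pderiv_var p f"
proof -
  have monomial_left: "pderiv_var p (xpow a * g) = xpow a * pderiv_var p g + g * pderiv_var p (xpow a)" for a
  proof -
    let ?L = "\<lambda>g. pderiv_var p (xpow a * g) - (xpow a * pderiv_var p g + g * pderiv_var p (xpow a))"
    have "?L g = 0"
    proof (rule additive_eq_0_if_monomials[where L = ?L])
      show "?L (u + w) = ?L u + ?L w" for u w
        by (simp add: distrib_left distrib_right pderiv_var_add)
      show "?L (cst c * xpow b) = 0" for c :: 'k and b
      proof -
        have "xpow a * (cst c * xpow b) = cst c * (xpow a * xpow b)"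
          by (rule mult.left_commute)
        then show ?thesis
          by (simp add: pderiv_var_cst_mult pderiv_var_xpow_mult distrib_left mult.left_commute)
      qed
    qed
    then show ?thesis by simp
  qed
  let ?L = "\<lambda>f. pderiv_var p (f * g) - (f * pderiv_var p g + g * pderiv_var p f)"
  have "?L f = 0"
  proof (rule additive_eq_0_if_monomials[where L = ?L])
    show "?L (u + w) = ?L u + ?L w" for u w
      by (simp add: distrib_left distrib_right pderiv_var_add)
    show "?L (cst c * xpow b) = 0" for c :: 'k and b
      by (simp only: mult.assoc pderiv_var_cst_mult monomial_left) (simp add: distrib_left mult.left_commute)
  qed
  then show ?thesis by simp
qed

lemma pderiv_var_in_Der: "pderiv_var p \<in> Der"
  unfolding Der_def is_derivation_def mem_Collect_eq
  by (intro conjI allI pderiv_var_add pderiv_var_cst_mult pderiv_var_mult)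

lemma Der_add_apply: "\<eta> \<in> Der \<Longrightarrow> \<eta> (f + g) = \<eta> f + \<eta> g"
  unfolding Der_def is_derivation_def by simp

lemma Der_cst_mult_apply: "\<eta> \<in> Der \<Longrightarrow> \<eta> (cst c * f) = cst c * \<eta> f"
  unfolding Der_def is_derivation_def mem_Collect_eq by (elim conjE allE)

lemma Der_leibniz: "\<eta> \<in> Der \<Longrightarrow> \<eta> (f * g) = f * \<eta> g + g * \<eta> f"
  unfolding Der_def is_derivation_def by simp

lemma Der_lincomb:
  fixes \<eta> \<zeta> :: "('n, 'k::comm_ring_1) mpoly \<Rightarrow> ('n, 'k) mpoly"
  assumes "\<eta> \<in> Der" "\<zeta> \<in> Der"
  shows "(\<lambda>g. h * \<eta> g + k * \<zeta> g) \<in> Der"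
proof -
  have "h * \<eta> (f + g) + k * \<zeta> (f + g) = h * \<eta> f + k * \<zeta> f + (h * \<eta> g + k * \<zeta> g)" for f g
    by (simp add: Der_add_apply[OF assms(1)] Der_add_apply[OF assms(2)] algebra_simps)
  moreover have "h * \<eta> (cst c * f) + k * \<zeta> (cst c * f) = cst c * (h * \<eta> f + k * \<zeta> f)" for c f
    by (simp add: Der_cst_mult_apply[OF assms(1)] Der_cst_mult_apply[OF assms(2)] distrib_left mult.left_commute)
  moreover have "h * \<eta> (f * g) + k * \<zeta> (f * g) =
      f * (h * \<eta> g + k * \<zeta> g) + g * (h * \<eta> f + k * \<zeta> f)" for f g
    by (simp add: Der_leibniz[OF assms(1)] Der_leibniz[OF assms(2)] algebra_simps)
  ultimately show ?thesis by (simp add: Der_def is_derivation_def)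
qed

lemma Der_mult_left: "\<eta> \<in> Der \<Longrightarrow> (\<lambda>g. h * \<eta> g) \<in> (Der :: (('n, 'k::comm_ring_1) mpoly \<Rightarrow> _) set)"
  using Der_lincomb[of \<eta> \<eta> h 0] by simp

lemma Der_add: "\<eta> \<in> Der \<Longrightarrow> \<zeta> \<in> Der \<Longrightarrow> (\<lambda>g. \<eta> g + \<zeta> g) \<in> (Der :: (('n, 'k::comm_ring_1) mpoly \<Rightarrow> _) set)"
  using Der_lincomb[of \<eta> \<zeta> 1 1] by simp

lemma Der_diff: "\<eta> \<in> Der \<Longrightarrow> \<zeta> \<in> Der \<Longrightarrow> (\<lambda>g. \<eta> g - \<zeta> g) \<in> (Der :: (('n, 'k::comm_ring_1) mpoly \<Rightarrow> _) set)"
  using Der_lincomb[of \<eta> \<zeta> 1 "-1"] by simp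

lemma Der_zero: "(\<lambda>g. 0) \<in> (Der :: (('n, 'k::comm_ring_1) mpoly \<Rightarrow> _) set)"
  by (simp add: Der_def is_derivation_def)

lemma Der_sum:
  "(\<And>i. i \<in> I \<Longrightarrow> \<zeta> i \<in> Der) \<Longrightarrow> (\<lambda>g. \<Sum>i\<in>I. \<zeta> i g) \<in> (Der :: (('n, 'k::comm_ring_1) mpoly \<Rightarrow> _) set)"
proof (induction I rule: infinite_finite_induct)
  case (insert i I)
  then show ?case using Der_add[of "\<zeta> i" "\<lambda>g. \<Sum>i\<in>I. \<zeta> i g"] by simp
qed (simp_all add: Der_zero)

lemma mi_abs_add: "mi_abs (a + b) = mi_abs a + mi_abs b"
  by (simp add: mi_abs_def lookup_add sum.distrib)

lemma mi_abs_mi_unit: "mi_abs (mi_unit i :: 'n::finite \<Rightarrow>\<^sub>0 nat) = 1"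
  by (simp add: mi_abs_def lookup_mi_unit)

lemma mi_abs_eq_0_iff: "mi_abs (a :: 'n::finite \<Rightarrow>\<^sub>0 nat) = 0 \<longleftrightarrow> a = 0"
proof
  assume "mi_abs a = 0"
  then show "a = 0" by (intro poly_mapping_eqI) (simp add: mi_abs_def)
qed (simp add: mi_abs_def)

lemma mi_nonzero_eq_add_unit:
  assumes "(a :: 'n \<Rightarrow>\<^sub>0 nat) \<noteq> 0"
  obtains b i where "a = b + mi_unit i"
proof -
  obtain i where i: "Poly_Mapping.lookup a i \<noteq> 0"
    using assms by (metis poly_mapping_eqI lookup_zero)
  have "a = (a - mi_unit i) + mi_unit i"
    by (rule poly_mapping_eqI) (use i in \<open>auto simp: lookup_add lookup_minus lookup_mi_unit\<close>)
  then show ?thesis by (rule that)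
qed

lemma mi_induct [case_names zero add_unit]:
  assumes zero: "P 0" and add_unit: "\<And>a i. P a \<Longrightarrow> P (a + mi_unit i)"
  shows "P (a :: 'n::finite \<Rightarrow>\<^sub>0 nat)"
proof (induction "mi_abs a" arbitrary: a rule: less_induct)
  case less
  show ?case
  proof (cases "a = 0")
    case False
    then obtain b i where a: "a = b + mi_unit i" by (rule mi_nonzero_eq_add_unit)
    then have "mi_abs b < mi_abs a" by (simp add: mi_abs_add mi_abs_mi_unit)
    then show ?thesis using less a by (simp add: add_unit)
  qed (simp add: zero)
qed

lemma derivation_xpow_eq_0:
  fixes D :: "('n::finite, 'k::comm_ring_1) mpoly \<Rightarrow> ('n, 'k) mpoly"
  assumes leibniz: "\<And>f g. D (f * g) = f * D g + g * D f" and vars: "\<And>i. D (xpow (mi_unit i)) = 0"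
  shows "D (xpow a) = 0"
proof (induction a rule: mi_induct)
  case zero
  show ?case using leibniz[of 1 1] by (simp add: xpow_0)
next
  case (add_unit a i)
  then show ?case by (simp only: xpow_add leibniz vars) simp
qed

lemma Der_eqI:
  fixes \<eta> \<zeta> :: "('n::finite, 'k::comm_ring_1) mpoly \<Rightarrow> ('n, 'k) mpoly"
  assumes "\<eta> \<in> Der" "\<zeta> \<in> Der" and vars: "\<And>i. \<eta> (xpow (mi_unit i)) = \<zeta> (xpow (mi_unit i))"
  shows "\<eta> f = \<zeta> f"
proof -
  define L where "L f = \<eta> f - \<zeta> f" for f
  have L: "L \<in> Der" unfolding L_def by (rule Der_diff[OF assms(1,2)])
  have monomials: "L (xpow a) = 0" for a
    by (rule derivation_xpow_eq_0[OF Der_leibniz[OF L]]) (simp add: L_def vars)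
  have "L f = 0"
    by (rule additive_eq_0_if_monomials)
      (simp_all only: Der_add_apply[OF L] Der_cst_mult_apply[OF L] monomials mult_zero_right)
  then show ?thesis by (simp add: L_def)
qed

lemma pderiv_var_var: "pderiv_var p (xpow (mi_unit i) :: ('n, 'k::comm_ring_1) mpoly) = (if p = i then 1 else 0)"
  by (auto simp: pderiv_var_xpow lookup_mi_unit xpow_0 cst_1 cst_0)

lemma Der_eq_sum_pderiv_var:
  fixes \<eta> :: "('n::finite, 'k::comm_ring_1) mpoly \<Rightarrow> ('n, 'k) mpoly"
  assumes "\<eta> \<in> Der"
  shows "\<eta> g = (\<Sum>p\<in>UNIV. \<eta> (xpow (mi_unit p)) * pderiv_var p g)"
proof (rule Der_eqI[OF assms])
  show "(\<lambda>g. \<Sum>p\<in>UNIV. \<eta> (xpow (mi_unit p)) * pderiv_var p g) \<in> Der"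
    by (rule Der_sum, rule Der_mult_left, rule pderiv_var_in_Der)
  show "\<eta> (xpow (mi_unit i)) = (\<Sum>p\<in>UNIV. \<eta> (xpow (mi_unit p)) * pderiv_var p (xpow (mi_unit i)))" for i
  proof -
    have "(\<Sum>p\<in>UNIV. \<eta> (xpow (mi_unit p)) * pderiv_var p (xpow (mi_unit i))) =
        (\<Sum>p\<in>UNIV. if p = i then \<eta> (xpow (mi_unit p)) else 0)"
      by (rule sum.cong) (simp_all add: pderiv_var_var)
    then show ?thesis by simp
  qed
qed

lemma finite_mi_le: "finite {k. mi_le k (m :: 'n::finite \<Rightarrow>\<^sub>0 nat)}"
proof -
  have "Poly_Mapping.lookup ` {k. mi_le k m} \<subseteq> PiE UNIV (\<lambda>i. {..Poly_Mapping.lookup m i})"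
    by (auto simp: mi_le_def PiE_def extensional_def)
  then have "finite (Poly_Mapping.lookup ` {k. mi_le k m})"
    by (rule finite_subset) (simp add: finite_PiE)
  moreover have "inj_on Poly_Mapping.lookup {k. mi_le k m}"
    by (rule inj_onI) (simp add: poly_mapping_eqI)
  ultimately show ?thesis by (rule finite_imageD)
qed

lemma mi_le_add_unit: "mi_le k m \<Longrightarrow> mi_le k (m + mi_unit i)"
  by (auto simp: mi_le_def lookup_add intro: trans_le_add1)

lemma mi_le_add_diff: "mi_le k m \<Longrightarrow> m + a - k = m - k + a"
  by (intro poly_mapping_eqI) (simp add: mi_le_def lookup_add lookup_minus)

lemma mi_choose_right_0 [simp]: "mi_choose m 0 = 1"
  by (simp add: mi_choose_def)

lemma mi_choose_eq_0: "\<not> mi_le k m \<Longrightarrow> mi_choose m (k :: 'n::finite \<Rightarrow>\<^sub>0 nat) = 0"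
  unfolding mi_le_def mi_choose_def by (rule prod_zero) (auto simp: not_le)

lemma mi_choose_add_unit:
  "mi_choose (m + mi_unit i) (k :: 'n::finite \<Rightarrow>\<^sub>0 nat) =
     mi_choose m k + (if 0 < Poly_Mapping.lookup k i then mi_choose m (k - mi_unit i) else 0)"
proof -
  let ?P = "\<Prod>j\<in>UNIV - {i}. Poly_Mapping.lookup m j choose Poly_Mapping.lookup k j"
  have m_unit: "mi_choose (m + mi_unit i) k = (Suc (Poly_Mapping.lookup m i) choose Poly_Mapping.lookup k i) * ?P"
    unfolding mi_choose_def
    by (subst prod.remove[of UNIV i]) (auto simp: lookup_add lookup_mi_unit intro!: prod.cong)
  have m: "mi_choose m k = (Poly_Mapping.lookup m i choose Poly_Mapping.lookup k i) * ?P"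
    unfolding mi_choose_def by (subst prod.remove[of UNIV i]) auto
  have k_unit: "mi_choose m (k - mi_unit i) = (Poly_Mapping.lookup m i choose (Poly_Mapping.lookup k i - 1)) * ?P"
    unfolding mi_choose_def
    by (subst prod.remove[of UNIV i]) (auto simp: lookup_minus lookup_mi_unit intro!: prod.cong)
  show ?thesis
    by (cases "Poly_Mapping.lookup k i") (simp_all add: m_unit m k_unit distrib_right)
qed

lemma mi_le_add_unit_image:
  "(\<lambda>k. k + mi_unit i) ` {k. mi_le k m} = {k. mi_le k (m + mi_unit i) \<and> 0 < Poly_Mapping.lookup k i}"
proof (intro equalityI subsetI)
  fix k assume "k \<in> {k. mi_le k (m + mi_unit i) \<and> 0 < Poly_Mapping.lookup k i}"
  then have le: "mi_le k (m + mi_unit i)" and pos: "0 < Poly_Mapping.lookup k i" by simp_all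
  have "k = (k - mi_unit i) + mi_unit i"
    by (rule poly_mapping_eqI) (use pos in \<open>auto simp: lookup_add lookup_minus lookup_mi_unit\<close>)
  moreover have "mi_le (k - mi_unit i) m"
    using le by (auto simp: mi_le_def lookup_add lookup_minus lookup_mi_unit le_diff_conv)
  ultimately show "k \<in> (\<lambda>k. k + mi_unit i) ` {k. mi_le k m}" by blast
qed (auto simp: mi_le_def lookup_add lookup_mi_unit)

lemma sum_mi_le_add_unit_shift:
  "(\<Sum>k\<in>{k. mi_le k (m + mi_unit i)}. if 0 < Poly_Mapping.lookup k i then F k else 0) =
    (\<Sum>k\<in>{k. mi_le k (m :: 'n::finite \<Rightarrow>\<^sub>0 nat)}. F (k + mi_unit i))"
proof -
  have "(\<Sum>k\<in>{k. mi_le k (m + mi_unit i)}. if 0 < Poly_Mapping.lookup k i then F k else 0) =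
      (\<Sum>k\<in>(\<lambda>k. k + mi_unit i) ` {k. mi_le k m}. F k)"
    by (subst sum.inter_filter[symmetric]) (simp_all add: finite_mi_le mi_le_add_unit_image)
  also have "\<dots> = (\<Sum>k\<in>{k. mi_le k m}. F (k + mi_unit i))"
    by (simp add: sum.reindex inj_on_def)
  finally show ?thesis .
qed

lemma mi_abs_diff_less: "mi_le k m \<Longrightarrow> k \<noteq> 0 \<Longrightarrow> mi_abs (m - k) < mi_abs (m :: 'n::finite \<Rightarrow>\<^sub>0 nat)"
proof -
  assume "mi_le k m" "k \<noteq> 0"
  then have "m = (m - k) + k"
    by (intro poly_mapping_eqI) (simp add: mi_le_def lookup_add lookup_minus)
  then have "mi_abs m = mi_abs (m - k) + mi_abs k" by (metis mi_abs_add)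
  moreover have "mi_abs k \<noteq> 0" using \<open>k \<noteq> 0\<close> mi_abs_eq_0_iff by blast
  ultimately show ?thesis by simp
qed

locale mpoly_module =
  fixes act :: "('n::finite, 'k::comm_ring_1) mpoly \<Rightarrow> 'm::ab_group_add \<Rightarrow> 'm"
  assumes A_module: "A_module act"
begin

lemma act_one [simp]: "act 1 v = v"
  using A_module by (simp add: A_module_def)

lemma act_mult: "act (f * g) v = act f (act g v)"
  using A_module by (simp add: A_module_def)

lemma act_add_left: "act (f + g) v = act f v + act g v"
  using A_module by (simp add: A_module_def)

lemma act_add_right: "act f (v + w) = act f v + act f w"
  using A_module by (simp add: A_module_def)

lemma act_zero_right [simp]: "act f 0 = 0"
  using act_add_right[of f 0 0] by simp

lemma act_zero_left [simp]: "act 0 v = 0"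
  using act_add_left[of 0 0 v] by simp

lemma act_diff_right: "act f (v - w) = act f v - act f w"
  using act_add_right[of f "v - w" w] by (simp add: eq_diff_eq)

lemma act_uminus_left: "act (- f) v = - act f v"
  using act_add_left[of "- f" f v] by (simp add: eq_neg_iff_add_eq_0)

lemma act_commute: "act f (act g v) = act g (act f v)"
  by (metis act_mult mult.commute)

lemma act_sum_right: "act f (sum h I) = (\<Sum>i\<in>I. act f (h i))"
  using sum_comp_morphism[of "act f" h I] by (simp add: act_add_right comp_def)

definition Der_linear :: "((('n, 'k) mpoly \<Rightarrow> ('n, 'k) mpoly) \<Rightarrow> 'm \<Rightarrow> 'm) \<Rightarrow> bool" where
  "Der_linear E \<longleftrightarrow>
     (\<forall>\<eta>\<in>Der. \<forall>\<zeta>\<in>Der. \<forall>v. E (\<lambda>f. \<eta> f + \<zeta> f) v = E \<eta> v + E \<zeta> v) \<and>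
     (\<forall>\<eta>\<in>Der. \<forall>c v. E (\<lambda>f. cst c * \<eta> f) v = act (cst c) (E \<eta> v))"

lemma Der_linear_add: "Der_linear E \<Longrightarrow> \<eta> \<in> Der \<Longrightarrow> \<zeta> \<in> Der \<Longrightarrow> E (\<lambda>f. \<eta> f + \<zeta> f) v = E \<eta> v + E \<zeta> v"
  by (simp add: Der_linear_def)

lemma Der_linear_cst_mult: "Der_linear E \<Longrightarrow> \<eta> \<in> Der \<Longrightarrow> E (\<lambda>f. cst c * \<eta> f) v = act (cst c) (E \<eta> v)"
  by (simp add: Der_linear_def)

lemma Der_linear_zero: "Der_linear E \<Longrightarrow> E (\<lambda>f. 0) v = 0"
  using Der_linear_add[of E "\<lambda>f. 0" "\<lambda>f. 0" v] Der_zero by simp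

lemma Der_linear_sum:
  assumes E: "Der_linear E" and Der: "\<And>i. i \<in> I \<Longrightarrow> \<zeta> i \<in> Der"
  shows "E (\<lambda>g. \<Sum>i\<in>I. \<zeta> i g) v = (\<Sum>i\<in>I. E (\<zeta> i) v)"
  using Der
proof (induction I rule: infinite_finite_induct)
  case (insert i I)
  have "\<zeta> i \<in> Der" "(\<lambda>g. \<Sum>i\<in>I. \<zeta> i g) \<in> Der"
    using insert.prems by (auto intro: Der_sum)
  with insert show ?case by (simp add: Der_linear_add[OF E])
qed (simp_all add: Der_linear_zero[OF E])

lemma Der_linear_eq_0I:
  assumes E: "Der_linear E" and fields: "\<And>b p v. E (\<lambda>g. xpow b * pderiv_var p g) v = 0"
    and "\<eta> \<in> Der"
  shows "E \<eta> v = 0"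
proof -
  define \<xi> where "\<xi> p b g = cst (Poly_Mapping.lookup (\<eta> (xpow (mi_unit p))) b) * (xpow b * pderiv_var p g)" for p b g
  define K where "K p = Poly_Mapping.keys (\<eta> (xpow (mi_unit p)))" for p
  have \<xi>_Der: "\<xi> p b \<in> Der" for p b
    unfolding \<xi>_def by (rule Der_mult_left)+ (rule pderiv_var_in_Der)
  have "\<eta> = (\<lambda>g. \<Sum>p\<in>UNIV. \<Sum>b\<in>K p. \<xi> p b g)"
  proof
    fix g
    have "\<eta> g = (\<Sum>p\<in>UNIV. \<eta> (xpow (mi_unit p)) * pderiv_var p g)"
      by (rule Der_eq_sum_pderiv_var[OF \<open>\<eta> \<in> Der\<close>])
    also have "\<dots> = (\<Sum>p\<in>UNIV. (\<Sum>b\<in>K p. cst (Poly_Mapping.lookup (\<eta> (xpow (mi_unit p))) b) * xpow b) * pderiv_var p g)"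
      unfolding K_def by (subst mpoly_monomial_expansion) simp
    finally show "\<eta> g = (\<Sum>p\<in>UNIV. \<Sum>b\<in>K p. \<xi> p b g)"
      by (simp add: \<xi>_def sum_distrib_right mult.assoc)
  qed
  then have "E \<eta> v = E (\<lambda>g. \<Sum>p\<in>UNIV. \<Sum>b\<in>K p. \<xi> p b g) v"
    by simp
  also have "\<dots> = (\<Sum>p\<in>UNIV. \<Sum>b\<in>K p. E (\<xi> p b) v)"
    by (simp add: Der_linear_sum[OF E] Der_sum \<xi>_Der)
  also have "\<dots> = 0"
  proof -
    have "E (\<xi> p b) v = 0" for p b
      unfolding \<xi>_def
      by (simp add: fields Der_linear_cst_mult[OF E Der_mult_left[OF pderiv_var_in_Der]])
    then show ?thesis by simp
  qed
  finally show ?thesis .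
qed

lemma delta_apply: "delta act f E \<eta> v = E (\<lambda>g. f * \<eta> g) v - act f (E \<eta> v)"
  by (simp add: delta_def)

lemma Der_linear_delta:
  assumes E: "Der_linear E"
  shows "Der_linear (delta act f E)"
  unfolding Der_linear_def
proof (intro conjI ballI allI)
  fix \<eta> \<zeta> :: "('n, 'k) mpoly \<Rightarrow> ('n, 'k) mpoly" and v assume "\<eta> \<in> Der" "\<zeta> \<in> Der"
  moreover have "(\<lambda>g. f * (\<eta> g + \<zeta> g)) = (\<lambda>g. f * \<eta> g + f * \<zeta> g)"
    by (simp add: distrib_left)
  ultimately show "delta act f E (\<lambda>g. \<eta> g + \<zeta> g) v = delta act f E \<eta> v + delta act f E \<zeta> v"
    by (simp add: delta_apply Der_linear_add[OF E] Der_mult_left act_add_right)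
next
  fix \<eta> :: "('n, 'k) mpoly \<Rightarrow> ('n, 'k) mpoly" and c v assume "\<eta> \<in> Der"
  moreover have "(\<lambda>g. f * (cst c * \<eta> g)) = (\<lambda>g. cst c * (f * \<eta> g))"
    by (simp add: mult.left_commute)
  ultimately show "delta act f E (\<lambda>g. cst c * \<eta> g) v = act (cst c) (delta act f E \<eta> v)"
    by (simp add: delta_apply Der_linear_cst_mult[OF E] Der_mult_left act_diff_right act_commute)
qed

lemma delta_one: "delta act 1 E \<eta> v = 0"
  by (simp add: delta_apply)

lemma delta_zero: "Der_linear E \<Longrightarrow> delta act 0 E \<eta> v = 0"
  by (simp add: delta_apply Der_linear_zero)

lemma delta_add:
  assumes "Der_linear E" "\<eta> \<in> Der"
  shows "delta act (f + g) E \<eta> v = delta act f E \<eta> v + delta act g E \<eta> v"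
proof -
  have "(\<lambda>h. (f + g) * \<eta> h) = (\<lambda>h. f * \<eta> h + g * \<eta> h)"
    by (simp add: distrib_right)
  then show ?thesis
    by (simp add: delta_apply Der_linear_add[OF assms(1) Der_mult_left[OF assms(2)] Der_mult_left[OF assms(2)]]
        act_add_left)
qed

lemma delta_cst_mult:
  assumes "Der_linear E" "\<eta> \<in> Der"
  shows "delta act (cst c * f) E \<eta> v = act (cst c) (delta act f E \<eta> v)"
proof -
  have "(\<lambda>h. cst c * f * \<eta> h) = (\<lambda>h. cst c * (f * \<eta> h))"
    by (simp add: mult.assoc)
  then show ?thesis
    by (simp add: delta_apply Der_linear_cst_mult[OF assms(1) Der_mult_left[OF assms(2)]] act_diff_right act_mult)
qed

lemma delta_mult:
  "delta act (f * g) E \<eta> v =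
     delta act f (delta act g E) \<eta> v + act g (delta act f E \<eta> v) + act f (delta act g E \<eta> v)"
proof -
  have "(\<lambda>h. g * (f * \<eta> h)) = (\<lambda>h. f * g * \<eta> h)"
    by (simp add: ac_simps)
  then show ?thesis
    by (simp add: delta_apply act_diff_right act_mult act_commute[of g f] algebra_simps)
qed

lemma Lplus_act_cong:
  "(\<And>\<eta> v. \<eta> \<in> Der \<Longrightarrow> E \<eta> v = E' \<eta> v) \<Longrightarrow> Lplus_act act E m p v = Lplus_act act E' m p v"
  unfolding Lplus_act_def by (simp add: Der_mult_left pderiv_var_in_Der)

lemma Lplus_act_add:
  "Lplus_act act (\<lambda>\<eta> v. E \<eta> v + E' \<eta> v) m p v = Lplus_act act E m p v + Lplus_act act E' m p v"
  unfolding Lplus_act_def by (simp add: act_add_right sum.distrib)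

lemma Lplus_act_act:
  "Lplus_act act (\<lambda>\<eta> v. act h (E \<eta> v)) m p v = act h (Lplus_act act E m p v)"
  unfolding Lplus_act_def by (simp add: act_sum_right act_commute[of h])

lemma Lplus_act_delta_var:
  "Lplus_act act (delta act (xpow (mi_unit i)) E) m p v = Lplus_act act E (m + mi_unit i) p v"
proof -
  define h where "h b = E (\<lambda>g. xpow b * pderiv_var p g) v" for b
  define c where "c k = (-1::'k) ^ mi_abs k * of_nat (mi_choose m k)" for k
  define S where "S m = {k. mi_le k m}" for m :: "'n \<Rightarrow>\<^sub>0 nat"
  have "Lplus_act act (delta act (xpow (mi_unit i)) E) m p v =
      (\<Sum>k\<in>S m. act (cst (c k) * xpow k) (h (m - k + mi_unit i)) - act (cst (c k) * xpow (k + mi_unit i)) (h (m - k)))"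
  proof -
    have shift: "(\<lambda>g. xpow (mi_unit i) * (xpow b * pderiv_var p g)) = (\<lambda>g. xpow (b + mi_unit i) * pderiv_var p g)" for b
      by (simp add: xpow_add ac_simps)
    show ?thesis
      unfolding Lplus_act_def S_def c_def h_def delta_apply shift
      by (simp add: act_diff_right act_mult xpow_add)
  qed
  txt \<open>Pascal's rule splits each coefficient of the right-hand side in two; the second parts,
    reindexed by \<open>k \<mapsto> k + e\<^sub>i\<close>, are the negated shifted terms.\<close>
  also have "\<dots> = (\<Sum>k\<in>S (m + mi_unit i). act (cst (c k) * xpow k) (h (m + mi_unit i - k))) +
      (\<Sum>k\<in>S (m + mi_unit i). if 0 < Poly_Mapping.lookup k i
        then act (cst ((-1) ^ mi_abs k * of_nat (mi_choose m (k - mi_unit i))) * xpow k) (h (m + mi_unit i - k))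
        else 0)"
  proof -
    have "(\<Sum>k\<in>S (m + mi_unit i). act (cst (c k) * xpow k) (h (m + mi_unit i - k))) =
        (\<Sum>k\<in>S m. act (cst (c k) * xpow k) (h (m - k + mi_unit i)))"
      by (rule sum.mono_neutral_cong_right)
        (auto simp: S_def finite_mi_le mi_le_add_unit mi_le_add_diff c_def mi_choose_eq_0 cst_0)
    moreover have "(\<Sum>k\<in>S (m + mi_unit i). if 0 < Poly_Mapping.lookup k i
          then act (cst ((-1) ^ mi_abs k * of_nat (mi_choose m (k - mi_unit i))) * xpow k) (h (m + mi_unit i - k))
          else 0) =
        (\<Sum>k\<in>S m. - act (cst (c k) * xpow (k + mi_unit i)) (h (m - k)))"
      unfolding S_def sum_mi_le_add_unit_shift
      by (simp add: c_def mi_abs_add mi_abs_mi_unit cst_uminus act_uminus_left)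
    ultimately show ?thesis
      by (simp add: sum_subtractf sum_negf)
  qed
  also have "\<dots> = Lplus_act act E (m + mi_unit i) p v"
    unfolding Lplus_act_def S_def h_def c_def sum.distrib[symmetric]
    by (rule sum.cong) (auto simp: mi_choose_add_unit distrib_left cst_add cst_0 distrib_right act_add_left)
  finally show ?thesis .
qed

lemma Lplus_act_eq_leading:
  "Lplus_act act E m p v = E (\<lambda>g. xpow m * pderiv_var p g) v +
    (\<Sum>k\<in>{k. mi_le k m} - {0}.
      act (cst ((-1) ^ mi_abs k * of_nat (mi_choose m k)) * xpow k) (E (\<lambda>g. xpow (m - k) * pderiv_var p g) v))"
proof -
  have "0 \<in> {k. mi_le k m}" by (simp add: mi_le_def)
  then show ?thesis
    unfolding Lplus_act_def
    by (simp add: sum.remove[OF finite_mi_le] mi_abs_def xpow_0 cst_1)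
qed

definition Lplus_annihilates :: "((('n, 'k) mpoly \<Rightarrow> ('n, 'k) mpoly) \<Rightarrow> 'm \<Rightarrow> 'm) \<Rightarrow> nat \<Rightarrow> bool" where
  "Lplus_annihilates E t \<longleftrightarrow> (\<forall>m p v. t \<le> mi_abs m \<longrightarrow> Lplus_act act E m p v = 0)"

lemma Lplus_annihilates_cong:
  assumes "\<And>\<eta> v. \<eta> \<in> Der \<Longrightarrow> E \<eta> v = E' \<eta> v"
  shows "Lplus_annihilates E t \<longleftrightarrow> Lplus_annihilates E' t"
  unfolding Lplus_annihilates_def by (simp add: Lplus_act_cong[OF assms])

lemma Lplus_annihilates_zero:
  assumes "\<And>\<eta> v. \<eta> \<in> Der \<Longrightarrow> E \<eta> v = 0"
  shows "Lplus_annihilates E t"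
  unfolding Lplus_annihilates_def
  by (simp add: Lplus_act_cong[of E "\<lambda>\<eta> v. 0", OF assms]) (simp add: Lplus_act_def)

lemma Lplus_annihilates_add:
  "Lplus_annihilates E t \<Longrightarrow> Lplus_annihilates E' t \<Longrightarrow> Lplus_annihilates (\<lambda>\<eta> v. E \<eta> v + E' \<eta> v) t"
  by (simp add: Lplus_annihilates_def Lplus_act_add)

lemma Lplus_annihilates_act:
  "Lplus_annihilates E t \<Longrightarrow> Lplus_annihilates (\<lambda>\<eta> v. act h (E \<eta> v)) t"
  by (simp add: Lplus_annihilates_def Lplus_act_act)

lemma Lplus_annihilates_Suc: "Lplus_annihilates E t \<Longrightarrow> Lplus_annihilates E (Suc t)"
  by (simp add: Lplus_annihilates_def)

lemma Lplus_annihilates_Suc_iff_delta_var: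
  "Lplus_annihilates E (Suc t) \<longleftrightarrow> (\<forall>i. Lplus_annihilates (delta act (xpow (mi_unit i)) E) t)"
proof
  assume "Lplus_annihilates E (Suc t)"
  then show "\<forall>i. Lplus_annihilates (delta act (xpow (mi_unit i)) E) t"
    by (simp add: Lplus_annihilates_def Lplus_act_delta_var mi_abs_add mi_abs_mi_unit)
next
  assume deltas: "\<forall>i. Lplus_annihilates (delta act (xpow (mi_unit i)) E) t"
  show "Lplus_annihilates E (Suc t)"
    unfolding Lplus_annihilates_def
  proof (intro allI impI)
    fix m :: "'n \<Rightarrow>\<^sub>0 nat" and p v assume m: "Suc t \<le> mi_abs m"
    then have "m \<noteq> 0" by (auto simp: mi_abs_eq_0_iff[symmetric])
    then obtain b i where b: "m = b + mi_unit i" by (rule mi_nonzero_eq_add_unit)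
    with m have "t \<le> mi_abs b" by (simp add: mi_abs_add mi_abs_mi_unit)
    with deltas show "Lplus_act act E m p v = 0"
      by (simp add: b Lplus_annihilates_def Lplus_act_delta_var[symmetric])
  qed
qed

lemma Lplus_annihilates_delta_xpow:
  "Lplus_annihilates E (Suc t) \<Longrightarrow> Lplus_annihilates (delta act (xpow a) E) t"
proof (induction a rule: mi_induct)
  case zero
  show ?case by (rule Lplus_annihilates_zero) (simp add: xpow_0 delta_one)
next
  case (add_unit a i)
  have IH: "Lplus_annihilates (delta act (xpow a) E) t"
    using add_unit by simp
  have "xpow (a + mi_unit i) = xpow (mi_unit i) * (xpow a :: ('n, 'k) mpoly)"
    by (simp add: xpow_add mult.commute)
  then have "delta act (xpow (a + mi_unit i)) E = (\<lambda>\<eta> v.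
      delta act (xpow (mi_unit i)) (delta act (xpow a) E) \<eta> v
      + act (xpow a) (delta act (xpow (mi_unit i)) E \<eta> v) + act (xpow (mi_unit i)) (delta act (xpow a) E \<eta> v))"
    by (intro ext) (simp only: delta_mult)
  moreover have "Lplus_annihilates (delta act (xpow (mi_unit i)) (delta act (xpow a) E)) t"
    using Lplus_annihilates_Suc[OF IH] by (simp add: Lplus_annihilates_Suc_iff_delta_var)
  moreover have "Lplus_annihilates (delta act (xpow (mi_unit i)) E) t"
    using add_unit.prems by (simp add: Lplus_annihilates_Suc_iff_delta_var)
  ultimately show ?case
    using IH by (simp add: Lplus_annihilates_add Lplus_annihilates_act)
qed

lemma Lplus_annihilates_delta:
  assumes E: "Der_linear E" and annihilates: "Lplus_annihilates E (Suc t)"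
  shows "Lplus_annihilates (delta act f E) t"
proof (induction f rule: mpoly_induct)
  case (monomial c a)
  have "Lplus_annihilates (delta act (cst c * xpow a) E) t \<longleftrightarrow>
      Lplus_annihilates (\<lambda>\<eta> v. act (cst c) (delta act (xpow a) E \<eta> v)) t"
    by (rule Lplus_annihilates_cong) (rule delta_cst_mult[OF E])
  then show ?case
    using Lplus_annihilates_act[OF Lplus_annihilates_delta_xpow[OF annihilates]] by simp
next
  case zero
  show ?case by (rule Lplus_annihilates_zero) (rule delta_zero[OF E])
next
  case (add f g)
  have "Lplus_annihilates (delta act (f + g) E) t \<longleftrightarrow>
      Lplus_annihilates (\<lambda>\<eta> v. delta act f E \<eta> v + delta act g E \<eta> v) t"
    by (rule Lplus_annihilates_cong) (rule delta_add[OF E])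
  then show ?case
    using Lplus_annihilates_add[OF add.IH] by simp
qed

lemma Lplus_annihilates_Suc_iff_delta:
  "Der_linear E \<Longrightarrow> Lplus_annihilates E (Suc t) \<longleftrightarrow> (\<forall>f. Lplus_annihilates (delta act f E) t)"
  using Lplus_annihilates_delta Lplus_annihilates_Suc_iff_delta_var by blast

lemma Lplus_annihilates_0_iff:
  assumes E: "Der_linear E"
  shows "Lplus_annihilates E 0 \<longleftrightarrow> (\<forall>\<eta>\<in>Der. \<forall>v. E \<eta> v = 0)"
proof
  assume annihilates: "Lplus_annihilates E 0"
  have "E (\<lambda>g. xpow b * pderiv_var p g) v = 0" for b p v
  proof (induction "mi_abs b" arbitrary: b v rule: less_induct)
    case less
    have "(\<Sum>k\<in>{k. mi_le k b} - {0}.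
        act (cst ((-1) ^ mi_abs k * of_nat (mi_choose b k)) * xpow k) (E (\<lambda>g. xpow (b - k) * pderiv_var p g) v)) = 0"
    proof (rule sum.neutral, rule ballI)
      fix k assume "k \<in> {k. mi_le k b} - {0}"
      then have "mi_abs (b - k) < mi_abs b" by (auto intro: mi_abs_diff_less)
      then show "act (cst ((-1) ^ mi_abs k * of_nat (mi_choose b k)) * xpow k) (E (\<lambda>g. xpow (b - k) * pderiv_var p g) v) = 0"
        using less by simp
    qed
    then have "E (\<lambda>g. xpow b * pderiv_var p g) v = Lplus_act act E b p v"
      by (simp add: Lplus_act_eq_leading)
    then show ?case
      using annihilates by (simp add: Lplus_annihilates_def)
  qed
  then show "\<forall>\<eta>\<in>Der. \<forall>v. E \<eta> v = 0"
    using Der_linear_eq_0I[OF E] by blast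
qed (simp add: Lplus_annihilates_zero)

lemma is_diff_iff_Lplus_annihilates:
  "Der_linear E \<Longrightarrow> is_diff act s E \<longleftrightarrow> Lplus_annihilates E (Suc s)"
proof (induction s arbitrary: E)
  case 0
  then show ?case
    by (simp add: Lplus_annihilates_Suc_iff_delta Lplus_annihilates_0_iff Der_linear_delta)
next
  case (Suc s)
  then show ?case
    by (simp add: Lplus_annihilates_Suc_iff_delta[of E "Suc s"] Der_linear_delta)
qed

end

theorem lemma4p2:
  fixes act :: "('n::finite, 'k::field_char_0) mpoly \<Rightarrow> 'm::ab_group_add \<Rightarrow> 'm"
    and rho :: "(('n, 'k) mpoly \<Rightarrow> ('n, 'k) mpoly) \<Rightarrow> 'm \<Rightarrow> 'm"
    and s :: nat
  assumes "alg_closed TYPE('k)"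
    and "AV_module act rho"
  shows "is_diff act s rho \<longleftrightarrow> annihilated_by_msLplus act rho s"
proof -
  interpret mpoly_module act
    using assms(2) by unfold_locales (simp add: AV_module_def)
  have "Der_linear rho"
    using assms(2) by (simp add: AV_module_def Der_linear_def)
  then show ?thesis
    by (simp add: is_diff_iff_Lplus_annihilates Lplus_annihilates_def annihilated_by_msLplus_def)
qed

end
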